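(* Let $s_j=\sigma_j+it_j\in\mathbb{C}$ ($j=1,2,3$). The double series $\sum_{m=1}^\infty\sum_{n<m}m^{-s_1}n^{-s_2}(m+n)^{-s_3}$ (over positive integers $n<m$) converges absolutely when $\sigma_1+\sigma_3>1$ and $\sigma_1+\sigma_2+\sigma_3>2$. The series $\sum_{k=2}^\infty\left|\sum_{k/2<m\le k-1}m^{-s_1}(k-m)^{-s_2}\right|^2k^{-s_3}$ converges absolutely when $2\sigma_1+\sigma_3>1$ and $2\sigma_1+2\sigma_2+\sigma_3>3$.
   Context: Complex powers $n^{s}=e^{s\log n}$ use the real logarithm of positive integers; $\sigma_j=\Re s_j$. *)

theory Defs
  imports "HOL-Analysis.Analysis"
begin

end

theory Submission
  imports Defs
begin

text \<open>Both series are dominated termwise by convergent real p-series.  In the double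
series \<open>m + n\<close> is comparable to \<open>m\<close>, and since \<open>n < m\<close>, decay in \<open>m\<close> can be traded for
decay in \<open>n\<close>: \<open>n powr (-b) \<le> n powr (-c) * m powr (c - b)\<close> for \<open>b \<le> c\<close>.  With
\<open>b = \<sigma>\<^sub>2\<close> and \<open>c = max \<sigma>\<^sub>2 ((\<sigma>\<^sub>1 + \<sigma>\<^sub>2 + \<sigma>\<^sub>3)/2)\<close> both resulting exponents exceed 1, so the
double series is dominated by a product of two p-series.  In the second series every \<open>m\<close> is
comparable to \<open>k\<close>, and the same trade bounds the inner sum by \<open>\<zeta>(c) k powr (c - \<sigma>\<^sub>1 - \<sigma>\<^sub>2)\<close>
up to a constant; \<open>c = max \<sigma>\<^sub>2 ((2\<sigma>\<^sub>1 + 2\<sigma>\<^sub>2 + \<sigma>\<^sub>3 + 1)/4)\<close> makes \<open>c > 1\<close> and the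
remaining exponent in \<open>k\<close> less than \<open>-1\<close>.\<close>

lemma norm_of_nat_powr: "norm (of_nat n powr (s::complex)) = real n powr Re s"
  by (subst norm_powr_real_powr) auto

lemma powr_minus_le_mult_powr:
  fixes x y b c :: real
  assumes "0 < x" "x \<le> y" "b \<le> c"
  shows "x powr (-b) \<le> x powr (-c) * y powr (c - b)"
proof -
  have "x powr (-b) = x powr (-c) * x powr (c - b)" by (simp add: powr_add[symmetric])
  also have "\<dots> \<le> x powr (-c) * y powr (c - b)"
    by (rule mult_left_mono) (use assms in \<open>auto intro: powr_mono2\<close>)
  finally show ?thesis .
qed

lemma powr_le_two_powr_abs_mult:
  fixes x y t :: real
  assumes "0 < x" "0 < y" "x \<le> 2 * y" "y \<le> 2 * x"
  shows "x powr t \<le> 2 powr \<bar>t\<bar> * y powr t"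
proof -
  have "(x / y) powr t \<le> 2 powr \<bar>t\<bar>"
  proof (cases "t \<ge> 0")
    case True
    have "x / y \<le> 2" using assms by (simp add: divide_le_eq)
    then have "(x / y) powr t \<le> 2 powr t" using True assms by (intro powr_mono2) auto
    then show ?thesis using True by simp
  next
    case False
    have "1/2 \<le> x / y" using assms by (simp add: le_divide_eq)
    then have "(x / y) powr t \<le> (1/2) powr t" using False assms by (intro powr_mono2') auto
    also have "\<dots> = 2 powr (-t)" by (simp add: powr_divide powr_minus_divide)
    finally show ?thesis using False by simp
  qed
  moreover have "x powr t = (x / y) powr t * y powr t" using assms by (simp add: powr_divide)
  ultimately show ?thesis by (simp add: mult_right_mono)
qed

lemma summable_on_real_powr_minus:
  assumes "1 < c"
  shows "(\<lambda>n::nat. real n powr (-c)) summable_on UNIV"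
  using assms by (subst summable_on_UNIV_nonneg_real_iff) (auto simp: summable_real_powr_iff)

lemma summable_on_product_nonneg:
  fixes f g :: "_ \<Rightarrow> real"
  assumes "f summable_on A" "g summable_on B"
    and "\<And>x. x \<in> A \<Longrightarrow> 0 \<le> f x" "\<And>y. y \<in> B \<Longrightarrow> 0 \<le> g y"
  shows "(\<lambda>(x, y). f x * g y) summable_on A \<times> B"
proof (rule summable_on_SigmaI[where g = "\<lambda>x. f x * infsum g B"])
  show "(\<lambda>x. f x * infsum g B) summable_on A"
    using assms(1) by (rule summable_on_cmult_left)
qed (use assms in \<open>auto intro: has_sum_cmult_right has_sum_infsum\<close>)

lemma norm_double_zeta_term_le:
  fixes s1 s2 s3 :: complex
  assumes "0 < n" "n < m" "Re s2 \<le> c"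
  shows "norm (of_nat m powr (-s1) * of_nat n powr (-s2) * of_nat (m + n) powr (-s3))
         \<le> 2 powr \<bar>Re s3\<bar> * real m powr (-(Re s1 + Re s2 + Re s3 - c)) * real n powr (-c)"
proof -
  have sum_le: "real (m + n) powr (- Re s3) \<le> 2 powr \<bar>Re s3\<bar> * real m powr (- Re s3)"
    using powr_le_two_powr_abs_mult[of "real (m + n)" "real m" "- Re s3"] assms by simp
  have n_le: "real n powr (- Re s2) \<le> real n powr (-c) * real m powr (c - Re s2)"
    using powr_minus_le_mult_powr[of "real n" "real m" "Re s2" c] assms by simp
  have "norm (of_nat m powr (-s1) * of_nat n powr (-s2) * of_nat (m + n) powr (-s3))
        = real m powr (- Re s1) * real n powr (- Re s2) * real (m + n) powr (- Re s3)"
    by (simp only: norm_mult norm_of_nat_powr uminus_complex.sel)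
  also have "\<dots> \<le> real m powr (- Re s1) * (real n powr (-c) * real m powr (c - Re s2))
                   * (2 powr \<bar>Re s3\<bar> * real m powr (- Re s3))"
    by (intro mult_mono sum_le n_le mult_left_mono) auto
  also have "\<dots> = 2 powr \<bar>Re s3\<bar> * real m powr (-(Re s1 + Re s2 + Re s3 - c)) * real n powr (-c)"
    by (simp add: powr_add[symmetric] algebra_simps)
  finally show ?thesis .
qed

lemma norm_sum_upper_half_le:
  fixes s1 s2 :: complex and k :: nat
  assumes "Re s2 \<le> c" "1 < c"
  shows "cmod (\<Sum>m\<in>{m::nat. real k / 2 < real m \<and> m \<le> k - 1}.
                 of_nat m powr (-s1) * of_nat (k - m) powr (-s2))
         \<le> 2 powr \<bar>Re s1\<bar> * (\<Sum>n. real n powr (-c)) * real k powr (c - Re s1 - Re s2)"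
    (is "cmod (\<Sum>m\<in>?A. _) \<le> _")
proof -
  define K where "K = 2 powr \<bar>Re s1\<bar> * real k powr (c - Re s1 - Re s2)"
  have summable: "summable (\<lambda>n. real n powr (-c))"
    using assms by (simp add: summable_real_powr_iff)
  have term_le: "norm (of_nat m powr (-s1) * of_nat (k - m) powr (-s2) :: complex)
                 \<le> K * real (k - m) powr (-c)" if "m \<in> ?A" for m
  proof -
    have m: "1 \<le> m" "1 \<le> k - m" "real m \<le> 2 * real k" "real k \<le> 2 * real m"
      using that by auto
    have m_le: "real m powr (- Re s1) \<le> 2 powr \<bar>Re s1\<bar> * real k powr (- Re s1)"
      using powr_le_two_powr_abs_mult[of "real m" "real k" "- Re s1"] m by simp
    have km_le: "real (k - m) powr (- Re s2) \<le> real (k - m) powr (-c) * real k powr (c - Re s2)"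
      using powr_minus_le_mult_powr[of "real (k - m)" "real k" "Re s2" c] m assms by simp
    have "norm (of_nat m powr (-s1) * of_nat (k - m) powr (-s2) :: complex)
          = real m powr (- Re s1) * real (k - m) powr (- Re s2)"
      by (simp only: norm_mult norm_of_nat_powr uminus_complex.sel)
    also have "\<dots> \<le> (2 powr \<bar>Re s1\<bar> * real k powr (- Re s1))
                     * (real (k - m) powr (-c) * real k powr (c - Re s2))"
      by (intro mult_mono m_le km_le) auto
    also have "\<dots> = K * real (k - m) powr (-c)"
      by (simp add: K_def powr_add[symmetric] algebra_simps)
    finally show ?thesis .
  qed
  have partial_le: "(\<Sum>m\<in>?A. real (k - m) powr (-c)) \<le> (\<Sum>n. real n powr (-c))"
  proof -
    have "inj_on (\<lambda>m. k - m) ?A" by (rule inj_onI) auto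
    then have "(\<Sum>m\<in>?A. real (k - m) powr (-c)) = (\<Sum>n\<in>(\<lambda>m. k - m) ` ?A. real n powr (-c))"
      by (simp add: sum.reindex)
    also have "\<dots> \<le> (\<Sum>n\<in>{..k}. real n powr (-c))" by (rule sum_mono2) auto
    also have "\<dots> \<le> (\<Sum>n. real n powr (-c))" by (rule sum_le_suminf[OF summable]) auto
    finally show ?thesis .
  qed
  have "cmod (\<Sum>m\<in>?A. of_nat m powr (-s1) * of_nat (k - m) powr (-s2))
        \<le> (\<Sum>m\<in>?A. K * real (k - m) powr (-c))"
    by (rule order_trans[OF norm_sum sum_mono]) (rule term_le)
  also have "\<dots> = K * (\<Sum>m\<in>?A. real (k - m) powr (-c))" by (simp add: sum_distrib_left)
  also have "\<dots> \<le> K * (\<Sum>n. real n powr (-c))"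
    by (rule mult_left_mono[OF partial_le]) (simp add: K_def)
  finally show ?thesis by (simp add: K_def mult_ac)
qed

lemma double_zeta_summable:
  fixes s1 s2 s3 :: complex
  assumes "Re s1 + Re s3 > 1" "Re s1 + Re s2 + Re s3 > 2"
  shows "(\<lambda>(m, n). norm (of_nat m powr (-s1) * of_nat n powr (-s2) * of_nat (m + n) powr (-s3)))
           summable_on {(m::nat, n::nat). 0 < n \<and> n < m}"
proof -
  define c where "c = max (Re s2) ((Re s1 + Re s2 + Re s3) / 2)"
  define p where "p = Re s1 + Re s2 + Re s3 - c"
  have c: "1 < c" "Re s2 \<le> c" and p: "1 < p"
    using assms unfolding c_def p_def by (auto simp: max_def field_simps)
  define F where "F = (\<lambda>(m::nat, n::nat). 2 powr \<bar>Re s3\<bar> * real m powr (-p) * real n powr (-c))"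
  have "F summable_on UNIV \<times> UNIV"
    unfolding F_def using summable_on_real_powr_minus[OF p] summable_on_real_powr_minus[OF c(1)]
    by (intro summable_on_product_nonneg summable_on_cmult_right) auto
  then have "F summable_on {(m, n). 0 < n \<and> n < m}"
    by (rule summable_on_subset) auto
  then show ?thesis
  proof (rule summable_on_comparison_test)
    fix x assume "x \<in> {(m::nat, n::nat). 0 < n \<and> n < m}"
    then obtain m n where "x = (m, n)" "0 < n" "n < m" by auto
    then show "(\<lambda>(m, n). norm (of_nat m powr (-s1) * of_nat n powr (-s2) * of_nat (m + n) powr (-s3)))
                 x \<le> F x"
      using norm_double_zeta_term_le[of n m s2 c s1 s3] c(2) by (simp add: F_def p_def)
  qed auto
qed

lemma upper_half_square_series_summable:
  fixes s1 s2 s3 :: complex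
  assumes "2 * Re s1 + Re s3 > 1" "2 * Re s1 + 2 * Re s2 + Re s3 > 3"
  shows "(\<lambda>k::nat. norm (complex_of_real
             ((cmod (\<Sum>m\<in>{m::nat. real k / 2 < real m \<and> m \<le> k - 1}.
                  of_nat m powr (-s1) * of_nat (k - m) powr (-s2)))^2)
             * of_nat k powr (-s3)))
           summable_on {2..}"
proof -
  define c where "c = max (Re s2) ((2 * Re s1 + 2 * Re s2 + Re s3 + 1) / 4)"
  define p where "p = 2 * Re s1 + 2 * Re s2 + Re s3 - 2 * c"
  have c: "1 < c" "Re s2 \<le> c" and p: "1 < p"
    using assms unfolding c_def p_def by (auto simp: max_def field_simps)
  define M where "M = 2 powr \<bar>Re s1\<bar> * (\<Sum>n. real n powr (-c))"
  have "(\<lambda>k. M\<^sup>2 * real k powr (-p)) summable_on UNIV"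
    using summable_on_real_powr_minus[OF p] by (rule summable_on_cmult_right)
  then have "(\<lambda>k. M\<^sup>2 * real k powr (-p)) summable_on {2::nat..}"
    by (rule summable_on_subset) auto
  then show ?thesis
  proof (rule summable_on_comparison_test)
    fix k :: nat
    define S where "S = (\<Sum>m\<in>{m::nat. real k / 2 < real m \<and> m \<le> k - 1}.
                           of_nat m powr (-s1) * of_nat (k - m) powr (-s2) :: complex)"
    have "cmod S \<le> M * real k powr (c - Re s1 - Re s2)"
      unfolding S_def M_def using norm_sum_upper_half_le[OF c(2,1)] by simp
    then have "(cmod S)\<^sup>2 \<le> (M * real k powr (c - Re s1 - Re s2))\<^sup>2"
      by (intro power_mono) auto
    also have "\<dots> = M\<^sup>2 * real k powr (2 * (c - Re s1 - Re s2))"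
      unfolding power_mult_distrib power2_eq_square mult_2 powr_add by (simp only: mult_ac)
    finally have "(cmod S)\<^sup>2 * real k powr (- Re s3)
                  \<le> M\<^sup>2 * real k powr (2 * (c - Re s1 - Re s2)) * real k powr (- Re s3)"
      by (rule mult_right_mono) simp
    also have "\<dots> = M\<^sup>2 * real k powr (-p)"
      by (simp add: p_def mult.assoc powr_add[symmetric] algebra_simps)
    finally show "norm (complex_of_real ((cmod S)\<^sup>2) * of_nat k powr (-s3)) \<le> M\<^sup>2 * real k powr (-p)"
      by (simp only: norm_mult norm_of_nat_powr uminus_complex.sel norm_of_real power_abs
                     abs_norm_cancel)
  qed auto
qed

theorem theorem2p1:
  fixes s1 s2 s3 :: complex
  shows "(Re s1 + Re s3 > 1 \<and> Re s1 + Re s2 + Re s3 > 2 \<longrightarrow>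
           (\<lambda>(m, n). norm (of_nat m powr (-s1) * of_nat n powr (-s2) * of_nat (m + n) powr (-s3)))
             summable_on {(m::nat, n::nat). 0 < n \<and> n < m})
       \<and> (2 * Re s1 + Re s3 > 1 \<and> 2 * Re s1 + 2 * Re s2 + Re s3 > 3 \<longrightarrow>
           (\<lambda>k::nat. norm (complex_of_real
               ((cmod (\<Sum>m\<in>{m::nat. real k / 2 < real m \<and> m \<le> k - 1}.
                    of_nat m powr (-s1) * of_nat (k - m) powr (-s2)))^2)
               * of_nat k powr (-s3)))
             summable_on {2..})"
  using double_zeta_summable[of s1 s3 s2] upper_half_square_series_summable[of s1 s3 s2] by blast

end
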